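(* Let $k\geq 2$ be an integer and let $A=[\bm{a}_1,\dots,\bm{a}_n]\in\mathbb{R}^{m\times n}$ have columns with $\|\bm{a}_i\|_2=1$ for all $i$. Suppose the mutual coherence $\mu=\max_{1\leq i<j\leq n}|\langle \bm{a}_i,\bm{a}_j\rangle|$ satisfies $\mu<\frac{1}{2k-1}$. Let $\lambda>0$, let $\bm{x}\in\mathbb{R}^n$ be arbitrary, let $\bm{z}\in\mathbb{R}^m$ with $\|\bm{z}\|_2\leq\lambda$, and set $\bm{b}=A\bm{x}+\bm{z}$. Let $\bm{x}^{\sharp}$ be an optimal solution of $$\min_{\bm{y}\in\mathbb{R}^n}\ \|\bm{y}\|_1+\frac{1}{2\lambda}\|\bm{b}-A\bm{y}\|_2^2 .$$ Define $$\alpha_1=\frac{\sqrt{1+(k-1)\mu}}{1-(k-1)\mu},\qquad \alpha_2=\frac{\sqrt{k}\,\mu}{1-(k-1)\mu},$$ $$f_k(t)=kt^2+3\sqrt{k}\,t+3,\qquad g_k(t)=2kt^2+4\sqrt{k}\,t+1,$$ and $$\widehat{C}_1=\frac{2}{\sqrt{k}\alpha_1+1},\quad \widehat{C}_2=2(\sqrt{k}\alpha_1+1),\quad \widehat{C}_3=\frac{2\sqrt{k}\alpha_1 f_k(\alpha_2)+2g_k(\alpha_2)}{\sqrt{k}(1-\sqrt{k}\alpha_2)(\sqrt{k}\alpha_1+1)},$$ $$\widehat{C}_4=\frac{\big(\sqrt{k}\alpha_1(5+2\sqrt{k}\alpha_2)+g_k(\alpha_2)\big)(\sqrt{k}\alpha_1+1)}{\sqrt{k}(1-\sqrt{k}\alpha_2)}.$$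 Then $$\|A(\bm{x}^{\sharp}-\bm{x})\|_2\leq \widehat{C}_1\|\bm{x}-\bm{x}_{[k]}\|_1+\widehat{C}_2\lambda,\qquad \|\bm{x}^{\sharp}-\bm{x}\|_2\leq \widehat{C}_3\|\bm{x}-\bm{x}_{[k]}\|_1+\widehat{C}_4\lambda.$$
   Context: For $\bm{x}\in\mathbb{R}^n$, $\bm{x}_{[k]}$ denotes a best $k$-term approximation of $\bm{x}$, i.e. $\bm{x}_{[k]}\in\arg\min_{\|\bm{y}\|_0\leq k}\|\bm{y}-\bm{x}\|_2$, where $\|\bm{y}\|_0$ is the number of nonzero entries of $\bm{y}$. *)

theory Defs
  imports "HOL-Analysis.Analysis"
begin

definition l1norm :: "real ^ 'n \<Rightarrow> real" where
  "l1norm x = (\<Sum>i\<in>UNIV. \<bar>x $ i\<bar>)"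

definition l0 :: "real ^ 'n \<Rightarrow> nat" where
  "l0 x = card {i. x $ i \<noteq> 0}"

definition best_k_term :: "nat \<Rightarrow> real ^ 'n \<Rightarrow> real ^ 'n \<Rightarrow> bool" where
  "best_k_term k x y \<longleftrightarrow> l0 y \<le> k \<and> (\<forall>y'. l0 y' \<le> k \<longrightarrow> norm (y - x) \<le> norm (y' - x))"

text \<open>Mutual coherence: maximum of absolute inner products of distinct columns (0 if there is only one column).\<close>
definition mutual_coherence :: "real ^ 'n ^ 'm \<Rightarrow> real" where
  "mutual_coherence A =
     Max ({\<bar>column i A \<bullet> column j A\<bar> | i j. i \<noteq> j} \<union> {0})"

definition alpha1 :: "nat \<Rightarrow> real \<Rightarrow> real" where
  "alpha1 k \<mu> = sqrt (1 + (real k - 1) * \<mu>) / (1 - (real k - 1) * \<mu>)"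

definition alpha2 :: "nat \<Rightarrow> real \<Rightarrow> real" where
  "alpha2 k \<mu> = sqrt (real k) * \<mu> / (1 - (real k - 1) * \<mu>)"

definition fk :: "nat \<Rightarrow> real \<Rightarrow> real" where
  "fk k t = real k * t\<^sup>2 + 3 * sqrt (real k) * t + 3"

definition gk :: "nat \<Rightarrow> real \<Rightarrow> real" where
  "gk k t = 2 * real k * t\<^sup>2 + 4 * sqrt (real k) * t + 1"

definition C1 :: "nat \<Rightarrow> real \<Rightarrow> real" where
  "C1 k \<mu> = 2 / (sqrt (real k) * alpha1 k \<mu> + 1)"

definition C2 :: "nat \<Rightarrow> real \<Rightarrow> real" where
  "C2 k \<mu> = 2 * (sqrt (real k) * alpha1 k \<mu> + 1)"

definition C3 :: "nat \<Rightarrow> real \<Rightarrow> real" where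
  "C3 k \<mu> = (2 * sqrt (real k) * alpha1 k \<mu> * fk k (alpha2 k \<mu>) + 2 * gk k (alpha2 k \<mu>))
     / (sqrt (real k) * (1 - sqrt (real k) * alpha2 k \<mu>) * (sqrt (real k) * alpha1 k \<mu> + 1))"

definition C4 :: "nat \<Rightarrow> real \<Rightarrow> real" where
  "C4 k \<mu> = ((sqrt (real k) * alpha1 k \<mu> * (5 + 2 * sqrt (real k) * alpha2 k \<mu>) + gk k (alpha2 k \<mu>))
       * (sqrt (real k) * alpha1 k \<mu> + 1))
     / (sqrt (real k) * (1 - sqrt (real k) * alpha2 k \<mu>))"

end

theory Submission
  imports Defs
begin

(* Write h = xs - x and a = norm (A h). Comparing the objective at xs with its value at x and
   using norm z \<le> lam gives l1norm xs - l1norm x \<le> a - a^2 / (2 lam); the usual cone argument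
   then bounds the l1 mass of h off the set T of its k largest entries by its mass on T plus
   2 l1norm (x - xk) + a - a^2 / (2 lam). Mutual coherence controls the Gram matrix on k-sparse
   vectors, whence norm h_T \<le> alpha1 a + alpha2 l1norm h_{-T}, and since the entries off T are
   dominated by the mean on T, norm h \<le> norm h_T + l1norm h_{-T} / (2 sqrt k). Eliminating
   norm h_T and l1norm h_{-T} leaves a quadratic inequality in a, which yields both bounds. *)

definition restrict_vec :: "'n set \<Rightarrow> 'a::zero ^ 'n \<Rightarrow> 'a ^ 'n" where
  "restrict_vec T h = (\<chi> i. if i \<in> T then h $ i else 0)"

lemma restrict_vec_nth [simp]: "restrict_vec T h $ i = (if i \<in> T then h $ i else 0)"
  by (simp add: restrict_vec_def)

lemma restrict_vec_add_Compl: "restrict_vec T h + restrict_vec (- T) h = (h :: 'a::monoid_add ^ 'n)"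
  by (simp add: vec_eq_iff)

lemma l1norm_restrict_vec: "l1norm (restrict_vec T h) = (\<Sum>i\<in>T. \<bar>h $ i\<bar>)"
  unfolding l1norm_def by (simp add: if_distrib sum.If_cases)

lemma l1norm_restrict_vec_add_Compl:
  "l1norm (restrict_vec T h) + l1norm (restrict_vec (- T) h) = l1norm h"
proof -
  have "l1norm h = (\<Sum>i\<in>UNIV. \<bar>restrict_vec T h $ i\<bar> + \<bar>restrict_vec (- T) h $ i\<bar>)"
    unfolding l1norm_def by (rule sum.cong) auto
  then show ?thesis
    by (simp only: sum.distrib l1norm_def)
qed

lemma l1norm_nonneg [simp]: "0 \<le> l1norm v"
  by (simp add: l1norm_def sum_nonneg)

lemma power2_norm_vec_eq_sum: "(norm v)\<^sup>2 = (\<Sum>i\<in>UNIV. (v $ i)\<^sup>2)"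
  for v :: "real ^ 'n"
  unfolding power2_norm_eq_inner inner_vec_def by (simp add: power2_eq_square)

lemma power2_norm_restrict_vec_add_Compl:
  "(norm (restrict_vec T h))\<^sup>2 + (norm (restrict_vec (- T) h))\<^sup>2 = (norm h)\<^sup>2"
  for h :: "real ^ 'n"
proof -
  have "orthogonal (restrict_vec T h) (restrict_vec (- T) h)"
    unfolding orthogonal_def inner_vec_def by (rule sum.neutral) auto
  then have "(norm (restrict_vec T h + restrict_vec (- T) h))\<^sup>2
      = (norm (restrict_vec T h))\<^sup>2 + (norm (restrict_vec (- T) h))\<^sup>2"
    by (rule norm_add_Pythagorean)
  then show ?thesis
    by (simp only: restrict_vec_add_Compl)
qed

lemma l1norm_le_sqrt_mult_norm:
  fixes v :: "real ^ 'n"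
  assumes "\<And>i. i \<notin> T \<Longrightarrow> v $ i = 0" and "card T \<le> k"
  shows "l1norm v \<le> sqrt (real k) * norm v"
proof -
  have "l1norm v = (\<Sum>i\<in>T. \<bar>v $ i\<bar>)"
    unfolding l1norm_def by (rule sum.mono_neutral_right) (use assms in auto)
  moreover have "(norm v)\<^sup>2 = (\<Sum>i\<in>T. (v $ i)\<^sup>2)"
    unfolding power2_norm_vec_eq_sum by (rule sum.mono_neutral_right) (use assms in auto)
  moreover have "(\<Sum>i\<in>T. \<bar>v $ i\<bar>)\<^sup>2 \<le> (\<Sum>i\<in>T. \<bar>v $ i\<bar>\<^sup>2) * card T"
    by (rule sum_squared_le_sum_of_squares)
  ultimately have "(l1norm v)\<^sup>2 \<le> real (card T) * (norm v)\<^sup>2"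
    by (simp add: mult.commute)
  also have "\<dots> \<le> real k * (norm v)\<^sup>2"
    using assms(2) by (intro mult_right_mono) simp_all
  finally have "(l1norm v)\<^sup>2 \<le> (sqrt (real k) * norm v)\<^sup>2"
    by (simp add: power_mult_distrib)
  then show ?thesis
    by (rule power2_le_imp_le) simp
qed

lemma power2_norm_le_mult_l1norm:
  fixes w :: "real ^ 'n"
  assumes "\<And>i. \<bar>w $ i\<bar> \<le> c"
  shows "(norm w)\<^sup>2 \<le> c * l1norm w"
proof -
  have "(norm w)\<^sup>2 = (\<Sum>i\<in>UNIV. \<bar>w $ i\<bar> * \<bar>w $ i\<bar>)"
    unfolding power2_norm_vec_eq_sum by (simp add: power2_eq_square flip: abs_mult)
  also have "\<dots> \<le> (\<Sum>i\<in>UNIV. c * \<bar>w $ i\<bar>)"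
    using assms by (intro sum_mono mult_right_mono) auto
  finally show ?thesis
    by (simp add: l1norm_def sum_distrib_left)
qed

lemma finite_mutual_coherence_set:
  fixes A :: "real ^ 'n ^ 'm"
  shows "finite ({\<bar>column i A \<bullet> column j A\<bar> | i j. i \<noteq> j} \<union> {0})"
proof -
  have "{\<bar>column i A \<bullet> column j A\<bar> | i j. i \<noteq> j}
      \<subseteq> (\<lambda>(i, j). \<bar>column i A \<bullet> column j A\<bar>) ` UNIV"
    by auto
  then have "finite {\<bar>column i A \<bullet> column j A\<bar> | i j. i \<noteq> j}"
    by (rule finite_subset) simp
  then show ?thesis
    by simp
qed

lemma mutual_coherence_nonneg: "0 \<le> mutual_coherence A"
  unfolding mutual_coherence_def by (rule Max_ge [OF finite_mutual_coherence_set]) simp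

lemma abs_inner_column_le_mutual_coherence:
  "i \<noteq> j \<Longrightarrow> \<bar>column i A \<bullet> column j A\<bar> \<le> mutual_coherence A"
  unfolding mutual_coherence_def by (rule Max_ge [OF finite_mutual_coherence_set]) blast

lemma inner_mult_vec_eq_sum_columns:
  fixes A :: "real ^ 'n ^ 'm"
  shows "(A *v v) \<bullet> (A *v w) = (\<Sum>i\<in>UNIV. \<Sum>j\<in>UNIV. v $ i * w $ j * (column i A \<bullet> column j A))"
  unfolding matrix_mult_sum scalar_mult_eq_scaleR inner_sum_left inner_sum_right
  by (subst sum.swap) (simp add: sum_distrib_left mult_ac)

lemma abs_inner_mult_vec_diff_le:
  fixes A :: "real ^ 'n ^ 'm"
  assumes "\<forall>i. norm (column i A) = 1"
  shows "\<bar>(A *v v) \<bullet> (A *v w) - v \<bullet> w\<bar>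
    \<le> mutual_coherence A * (l1norm v * l1norm w - (\<Sum>i\<in>UNIV. \<bar>v $ i\<bar> * \<bar>w $ i\<bar>))"
proof -
  let ?\<mu> = "mutual_coherence A"
  let ?G = "\<lambda>i j. column i A \<bullet> column j A"
  let ?off = "\<lambda>i j. if i = j then 0 else v $ i * w $ j * ?G i j"
  have "?G i i = 1" for i
    using assms by (simp add: norm_eq_1 [symmetric])
  then have "?off i j = v $ i * w $ j * ?G i j - (if i = j then v $ i * w $ i else 0)" for i j
    by auto
  then have "(A *v v) \<bullet> (A *v w) - v \<bullet> w = (\<Sum>i\<in>UNIV. \<Sum>j\<in>UNIV. ?off i j)"
    unfolding inner_mult_vec_eq_sum_columns by (simp add: sum_subtractf inner_vec_def)
  also have "\<bar>\<dots>\<bar> \<le> (\<Sum>i\<in>UNIV. \<Sum>j\<in>UNIV. \<bar>?off i j\<bar>)"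
    by (rule order_trans [OF sum_abs]) (intro sum_mono sum_abs)
  also have "\<dots> \<le> (\<Sum>i\<in>UNIV. \<Sum>j\<in>UNIV.
      ?\<mu> * \<bar>v $ i\<bar> * \<bar>w $ j\<bar> - (if i = j then ?\<mu> * \<bar>v $ i\<bar> * \<bar>w $ i\<bar> else 0))"
  proof (intro sum_mono)
    fix i j
    have "\<bar>v $ i * w $ j * ?G i j\<bar> \<le> \<bar>v $ i\<bar> * \<bar>w $ j\<bar> * ?\<mu>" if "i \<noteq> j"
      unfolding abs_mult
      by (rule mult_left_mono [OF abs_inner_column_le_mutual_coherence [OF that]]) simp
    then show "\<bar>?off i j\<bar>
        \<le> ?\<mu> * \<bar>v $ i\<bar> * \<bar>w $ j\<bar> - (if i = j then ?\<mu> * \<bar>v $ i\<bar> * \<bar>w $ i\<bar> else 0)"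
      by (simp add: mult_ac)
  qed
  also have "\<dots> = ?\<mu> * (l1norm v * l1norm w - (\<Sum>i\<in>UNIV. \<bar>v $ i\<bar> * \<bar>w $ i\<bar>))"
    unfolding l1norm_def sum_product
    by (simp add: sum_subtractf sum_distrib_left right_diff_distrib mult.assoc)
  finally show ?thesis .
qed

lemma abs_inner_mult_vec_disjoint_le:
  fixes A :: "real ^ 'n ^ 'm"
  assumes "\<forall>i. norm (column i A) = 1"
    and "\<And>i. i \<notin> T \<Longrightarrow> v $ i = 0" and "\<And>i. i \<in> T \<Longrightarrow> w $ i = 0"
  shows "\<bar>(A *v v) \<bullet> (A *v w)\<bar> \<le> mutual_coherence A * l1norm v * l1norm w"
proof -
  have vw: "v $ i * w $ i = 0" for i
    using assms(2,3) by (cases "i \<in> T") auto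
  have "v \<bullet> w = 0" and "(\<Sum>i\<in>UNIV. \<bar>v $ i\<bar> * \<bar>w $ i\<bar>) = 0"
    by (simp_all add: inner_vec_def vw flip: abs_mult)
  then show ?thesis
    using abs_inner_mult_vec_diff_le [OF assms(1), of v w] by (simp add: mult.assoc)
qed

lemma sparse_norm_mult_vec_deviation_le:
  fixes A :: "real ^ 'n ^ 'm"
  assumes "\<forall>i. norm (column i A) = 1"
    and "\<And>i. i \<notin> T \<Longrightarrow> v $ i = 0" and "card T \<le> k"
  shows "\<bar>(norm (A *v v))\<^sup>2 - (norm v)\<^sup>2\<bar> \<le> mutual_coherence A * (real k - 1) * (norm v)\<^sup>2"
proof -
  have "(l1norm v)\<^sup>2 \<le> (sqrt (real k) * norm v)\<^sup>2"
    using l1norm_le_sqrt_mult_norm [OF assms(2,3)]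
    by (intro power_mono) simp_all
  then have l1: "(l1norm v)\<^sup>2 \<le> real k * (norm v)\<^sup>2"
    by (simp add: power_mult_distrib)
  have "(norm v)\<^sup>2 = (\<Sum>i\<in>UNIV. \<bar>v $ i\<bar> * \<bar>v $ i\<bar>)"
    unfolding power2_norm_vec_eq_sum by (simp add: power2_eq_square flip: abs_mult)
  then have off_diag: "(l1norm v)\<^sup>2 - (\<Sum>i\<in>UNIV. \<bar>v $ i\<bar> * \<bar>v $ i\<bar>) \<le> (real k - 1) * (norm v)\<^sup>2"
    using l1 by (simp add: left_diff_distrib)
  have "\<bar>(norm (A *v v))\<^sup>2 - (norm v)\<^sup>2\<bar>
      \<le> mutual_coherence A * ((l1norm v)\<^sup>2 - (\<Sum>i\<in>UNIV. \<bar>v $ i\<bar> * \<bar>v $ i\<bar>))"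
    using abs_inner_mult_vec_diff_le [OF assms(1), of v v] by (simp only: dot_square_norm power2_eq_square)
  also have "\<dots> \<le> mutual_coherence A * ((real k - 1) * (norm v)\<^sup>2)"
    by (rule mult_left_mono [OF off_diag mutual_coherence_nonneg])
  finally show ?thesis
    by (simp only: mult.assoc)
qed

lemma sparse_norm_mult_vec_le:
  fixes A :: "real ^ 'n ^ 'm"
  assumes "\<forall>i. norm (column i A) = 1"
    and "\<And>i. i \<notin> T \<Longrightarrow> v $ i = 0" and "card T \<le> k" and "1 \<le> k"
  shows "norm (A *v v) \<le> sqrt (1 + (real k - 1) * mutual_coherence A) * norm v"
proof (rule power2_le_imp_le)
  have nonneg: "0 \<le> 1 + (real k - 1) * mutual_coherence A"
    using assms(4) mutual_coherence_nonneg [of A] by simp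
  have "(norm (A *v v))\<^sup>2 \<le> (1 + (real k - 1) * mutual_coherence A) * (norm v)\<^sup>2"
    using abs_le_D1 [OF sparse_norm_mult_vec_deviation_le [OF assms(1-3)]] by (simp add: algebra_simps)
  then show "(norm (A *v v))\<^sup>2 \<le> (sqrt (1 + (real k - 1) * mutual_coherence A) * norm v)\<^sup>2"
    using nonneg by (simp add: power_mult_distrib)
  show "0 \<le> sqrt (1 + (real k - 1) * mutual_coherence A) * norm v"
    using nonneg by simp
qed

lemma sparse_norm_le_alpha:
  fixes A :: "real ^ 'n ^ 'm"
  assumes cols: "\<forall>i. norm (column i A) = 1"
    and v: "\<And>i. i \<notin> T \<Longrightarrow> v $ i = 0" and w: "\<And>i. i \<in> T \<Longrightarrow> w $ i = 0"
    and T: "card T \<le> k" and k: "1 \<le> k" and \<mu>: "(real k - 1) * mutual_coherence A < 1"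
  shows "norm v \<le> alpha1 k (mutual_coherence A) * norm (A *v (v + w))
    + alpha2 k (mutual_coherence A) * l1norm w"
proof -
  define \<mu> where "\<mu> = mutual_coherence A"
  define r where "r = sqrt (1 + (real k - 1) * \<mu>)"
  define X where "X = r * norm (A *v (v + w)) + \<mu> * sqrt (real k) * l1norm w"
  have \<mu>0: "0 \<le> \<mu>"
    by (simp add: \<mu>_def mutual_coherence_nonneg)
  have den: "0 < 1 - (real k - 1) * \<mu>"
    using \<mu> by (simp add: \<mu>_def)
  have r: "0 \<le> r"
    using k \<mu>0 by (simp add: r_def)
  have cross: "\<bar>(A *v v) \<bullet> (A *v w)\<bar> \<le> \<mu> * l1norm v * l1norm w"
    unfolding \<mu>_def using cols v w by (rule abs_inner_mult_vec_disjoint_le)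
  have dev: "\<bar>(norm (A *v v))\<^sup>2 - (norm v)\<^sup>2\<bar> \<le> \<mu> * (real k - 1) * (norm v)\<^sup>2"
    using sparse_norm_mult_vec_deviation_le [OF cols v T] by (simp add: \<mu>_def)
  have Av: "norm (A *v v) \<le> r * norm v"
    unfolding r_def \<mu>_def by (rule sparse_norm_mult_vec_le [OF cols v T k])
  have "(1 - (real k - 1) * \<mu>) * norm v * norm v \<le> (norm (A *v v))\<^sup>2"
    using abs_le_D2 [OF dev] by (simp add: algebra_simps power2_eq_square)
  also have "\<dots> = (A *v v) \<bullet> (A *v (v + w)) - (A *v v) \<bullet> (A *v w)"
    by (simp add: matrix_vector_right_distrib inner_add_right dot_square_norm)
  also have "\<dots> \<le> norm (A *v v) * norm (A *v (v + w)) + \<mu> * l1norm v * l1norm w"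
    using norm_cauchy_schwarz [of "A *v v" "A *v (v + w)"] cross
      abs_ge_minus_self [of "(A *v v) \<bullet> (A *v w)"]
    by linarith
  also have "\<dots> \<le> r * norm v * norm (A *v (v + w)) + \<mu> * (sqrt (real k) * norm v) * l1norm w"
    using Av l1norm_le_sqrt_mult_norm [OF v T] \<mu>0
    by (intro add_mono mult_right_mono mult_left_mono) simp_all
  also have "\<dots> = X * norm v"
    by (simp add: X_def algebra_simps)
  finally have Xv: "(1 - (real k - 1) * \<mu>) * norm v * norm v \<le> X * norm v" .
  have "(1 - (real k - 1) * \<mu>) * norm v \<le> X"
  proof (cases "norm v = 0")
    case True
    have "0 \<le> X"
      unfolding X_def using r \<mu>0 by (intro add_nonneg_nonneg mult_nonneg_nonneg) simp_all
    with True show ?thesis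
      by simp
  next
    case False
    then have "0 < norm v"
      by simp
    with Xv show ?thesis
      by (rule mult_right_le_imp_le)
  qed
  then have "norm v \<le> X / (1 - (real k - 1) * \<mu>)"
    using den by (simp add: pos_le_divide_eq mult.commute)
  also have "\<dots> = alpha1 k \<mu> * norm (A *v (v + w)) + alpha2 k \<mu> * l1norm w"
    by (simp add: alpha1_def alpha2_def X_def r_def add_divide_distrib mult_ac)
  finally show ?thesis
    by (simp add: \<mu>_def)
qed

lemma obtain_max_sum_card_le:
  fixes f :: "'a::finite \<Rightarrow> real"
  obtains T where "card T \<le> k" and "\<And>T'. card T' \<le> k \<Longrightarrow> sum f T' \<le> sum f T"
proof -
  let ?C = "{T :: 'a set. card T \<le> k}"
  have "{} \<in> ?C"
    by simp
  then have "sum f ` ?C \<noteq> {}"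
    by blast
  then have "Max (sum f ` ?C) \<in> sum f ` ?C"
    by (intro Max_in) simp_all
  then obtain T where T: "card T \<le> k" and max: "Max (sum f ` ?C) = sum f T"
    by auto
  show thesis
  proof (rule that [OF T])
    show "sum f T' \<le> sum f T" if "card T' \<le> k" for T'
      unfolding max [symmetric] using that by (intro Max_ge) auto
  qed
qed

lemma max_sum_card_le_dominates:
  fixes f :: "'a::finite \<Rightarrow> real"
  assumes f: "\<And>i. 0 \<le> f i" and T: "card T \<le> k"
    and maximal: "\<And>T'. card T' \<le> k \<Longrightarrow> sum f T' \<le> sum f T" and i: "i \<notin> T"
  shows "real k * f i \<le> sum f T"
proof (cases "card T < k")
  case True
  then have "sum f (insert i T) \<le> sum f T"
    using i by (intro maximal) simp
  then have "f i \<le> 0"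
    using i by simp
  then have "f i = 0"
    using f [of i] by linarith
  then show ?thesis
    using f by (simp add: sum_nonneg)
next
  case False
  then have card: "card T = k"
    using T by simp
  have "f i \<le> f j" if j: "j \<in> T" for j
  proof -
    have "0 < card T"
      using j by (auto simp: card_gt_0_iff)
    then have "card (insert i (T - {j})) \<le> k"
      using card i j by (simp add: card_Diff_singleton)
    then have "sum f (insert i (T - {j})) \<le> sum f T"
      by (rule maximal)
    moreover have "sum f (insert i (T - {j})) = f i + (sum f T - f j)"
      using i j by (simp add: sum_diff1)
    ultimately show ?thesis
      by simp
  qed
  then have "(\<Sum>j\<in>T. f i) \<le> sum f T"
    by (rule sum_mono)
  then show ?thesis
    using card by simp
qed

text \<open>Off the set of the \<open>k\<close> largest entries every entry is at most the mean on that set.\<close>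
lemma norm_le_head_add_tail:
  fixes h :: "real ^ 'n"
  assumes T: "card T \<le> k" and k: "1 \<le> k"
    and maximal: "\<And>T'. card T' \<le> k \<Longrightarrow> (\<Sum>i\<in>T'. \<bar>h $ i\<bar>) \<le> (\<Sum>i\<in>T. \<bar>h $ i\<bar>)"
  shows "norm h \<le> norm (restrict_vec T h) + l1norm (restrict_vec (- T) h) / (2 * sqrt (real k))"
proof -
  define v w where "v = restrict_vec T h" and "w = restrict_vec (- T) h"
  define s where "s = sqrt (real k)"
  have s: "0 < s" "s\<^sup>2 = real k"
    using k by (simp_all add: s_def)
  have l1v: "l1norm v \<le> s * norm v"
    using l1norm_le_sqrt_mult_norm [OF _ T, of v] by (simp add: v_def s_def)
  have "real k * \<bar>w $ i\<bar> \<le> l1norm v" for i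
    using max_sum_card_le_dominates [of "\<lambda>i. \<bar>h $ i\<bar>", OF _ T maximal]
    by (cases "i \<in> T") (auto simp: v_def w_def l1norm_restrict_vec)
  then have "\<bar>w $ i\<bar> \<le> l1norm v / real k" for i
    using k by (simp add: field_simps)
  then have "(norm w)\<^sup>2 \<le> l1norm v / real k * l1norm w"
    by (rule power2_norm_le_mult_l1norm)
  also have "\<dots> \<le> s * norm v / real k * l1norm w"
    using l1v by (intro mult_right_mono divide_right_mono) simp_all
  also have "\<dots> = norm v * l1norm w / s"
    unfolding s(2) [symmetric] using s(1) by (simp add: power2_eq_square field_simps)
  finally have "(norm w)\<^sup>2 \<le> norm v * l1norm w / s" .
  moreover have "(norm v + l1norm w / (2 * s))\<^sup>2
      = (norm v)\<^sup>2 + norm v * l1norm w / s + (l1norm w / (2 * s))\<^sup>2"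
    using s(1) by (simp add: power2_sum power2_eq_square field_simps)
  ultimately have "(norm v)\<^sup>2 + (norm w)\<^sup>2 \<le> (norm v + l1norm w / (2 * s))\<^sup>2"
    using zero_le_power2 [of "l1norm w / (2 * s)"] by linarith
  then have "(norm h)\<^sup>2 \<le> (norm v + l1norm w / (2 * s))\<^sup>2"
    by (simp add: v_def w_def power2_norm_restrict_vec_add_Compl)
  then show ?thesis
    unfolding v_def w_def s_def
    by (rule power2_le_imp_le) simp
qed

lemma lasso_l1norm_gap:
  fixes A :: "real ^ 'n ^ 'm"
  assumes lam: "0 < lam" and z: "norm z \<le> lam" and b: "b = A *v x + z"
    and opt: "\<forall>y. l1norm xs + 1 / (2 * lam) * (norm (b - A *v xs))\<^sup>2
              \<le> l1norm y + 1 / (2 * lam) * (norm (b - A *v y))\<^sup>2"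
  shows "l1norm xs - l1norm x \<le> norm (A *v (xs - x)) - (norm (A *v (xs - x)))\<^sup>2 / (2 * lam)"
proof -
  define u where "u = A *v (xs - x)"
  have "b - A *v xs = z - u" and "b - A *v x = z"
    by (simp_all add: b u_def matrix_vector_mult_diff_distrib)
  then have "l1norm xs - l1norm x \<le> ((norm z)\<^sup>2 - (norm (z - u))\<^sup>2) / (2 * lam)"
    using spec [OF opt, of x] by (simp add: diff_divide_distrib)
  also have "\<dots> = (2 * (z \<bullet> u) - (norm u)\<^sup>2) / (2 * lam)"
    by (simp add: power2_norm_eq_inner inner_diff_left inner_diff_right inner_commute)
  also have "\<dots> \<le> (2 * (lam * norm u) - (norm u)\<^sup>2) / (2 * lam)"
    using norm_cauchy_schwarz [of z u] mult_right_mono [OF z norm_ge_zero [of u]] lam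
    by (intro divide_right_mono) auto
  also have "\<dots> = norm u - (norm u)\<^sup>2 / (2 * lam)"
    using lam by (simp add: field_simps)
  finally show ?thesis
    by (simp add: u_def)
qed

lemma l1norm_tail_le:
  fixes x xs xk :: "real ^ 'n"
  assumes xk: "card {i. xk $ i \<noteq> 0} \<le> k"
    and maximal: "\<And>T'. card T' \<le> k \<Longrightarrow> (\<Sum>i\<in>T'. \<bar>(xs - x) $ i\<bar>) \<le> (\<Sum>i\<in>T. \<bar>(xs - x) $ i\<bar>)"
  shows "l1norm (restrict_vec (- T) (xs - x))
    \<le> l1norm (restrict_vec T (xs - x)) + 2 * l1norm (x - xk) + (l1norm xs - l1norm x)"
proof -
  define h S where "h = xs - x" and "S = {i. xk $ i \<noteq> 0}"
  have "\<bar>h $ i\<bar> - 2 * \<bar>restrict_vec S h $ i\<bar> - 2 * \<bar>(x - xk) $ i\<bar> \<le> \<bar>xs $ i\<bar> - \<bar>x $ i\<bar>" for i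
  proof (cases "i \<in> S")
    case True
    then have "\<bar>restrict_vec S h $ i\<bar> = \<bar>h $ i\<bar>" and "\<bar>x $ i\<bar> - \<bar>xs $ i\<bar> \<le> \<bar>h $ i\<bar>"
      using abs_triangle_ineq2_sym [of "x $ i" "xs $ i"] by (simp_all add: h_def)
    then show ?thesis
      using abs_ge_zero [of "(x - xk) $ i"] by linarith
  next
    case False
    then have "\<bar>restrict_vec S h $ i\<bar> = 0" and "\<bar>(x - xk) $ i\<bar> = \<bar>x $ i\<bar>"
      and "\<bar>h $ i\<bar> \<le> \<bar>xs $ i\<bar> + \<bar>x $ i\<bar>"
      using abs_triangle_ineq4 [of "xs $ i" "x $ i"] by (simp_all add: h_def S_def)
    then show ?thesis
      by linarith
  qed
  then have "(\<Sum>i\<in>UNIV. \<bar>h $ i\<bar> - 2 * \<bar>restrict_vec S h $ i\<bar> - 2 * \<bar>(x - xk) $ i\<bar>)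
      \<le> (\<Sum>i\<in>UNIV. \<bar>xs $ i\<bar> - \<bar>x $ i\<bar>)"
    by (rule sum_mono)
  then have "l1norm h - 2 * l1norm (restrict_vec S h) - 2 * l1norm (x - xk) \<le> l1norm xs - l1norm x"
    unfolding l1norm_def by (simp only: sum_subtractf sum_distrib_left)
  moreover have "l1norm (restrict_vec S h) \<le> l1norm (restrict_vec T h)"
    using maximal [OF xk] by (simp add: l1norm_restrict_vec h_def S_def)
  ultimately show ?thesis
    using l1norm_restrict_vec_add_Compl [of T h] by (simp add: h_def)
qed

lemma alpha_bounds:
  fixes \<mu> :: real
  assumes k: "1 \<le> k" and \<mu>0: "0 \<le> \<mu>" and \<mu>: "\<mu> < 1 / (2 * real k - 1)"
  shows "(real k - 1) * \<mu> < 1" and "0 \<le> alpha1 k \<mu>" and "0 \<le> alpha2 k \<mu>"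
    and "sqrt (real k) * alpha2 k \<mu> < 1"
proof -
  have "0 < 2 * real k - 1"
    using k by simp
  then have coh: "(2 * real k - 1) * \<mu> < 1"
    using \<mu> by (simp add: pos_less_divide_eq mult.commute)
  moreover have "(real k - 1) * \<mu> \<le> (2 * real k - 1) * \<mu>"
    using \<mu>0 by (intro mult_right_mono) simp_all
  ultimately show den: "(real k - 1) * \<mu> < 1"
    by linarith
  show "0 \<le> alpha1 k \<mu>" and "0 \<le> alpha2 k \<mu>"
    using den k \<mu>0 by (simp_all add: alpha1_def alpha2_def)
  have "sqrt (real k) * alpha2 k \<mu> = real k * \<mu> / (1 - (real k - 1) * \<mu>)"
    by (simp add: alpha2_def)
  also have "\<dots> < 1"
    using den coh by (simp add: divide_less_eq algebra_simps)
  finally show "sqrt (real k) * alpha2 k \<mu> < 1" .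
qed

lemma le_of_quadratic_le:
  fixes a b lam sig :: real
  assumes lam: "0 < lam" and b: "0 < b" and sig: "0 \<le> sig"
    and quad: "a\<^sup>2 / (2 * lam) \<le> b * a + 2 * sig"
  shows "a \<le> 2 / b * sig + 2 * b * lam"
proof -
  have "a\<^sup>2 \<le> 2 * lam * (b * a) + 4 * lam * sig"
    using quad lam by (simp add: pos_divide_le_eq algebra_simps)
  moreover have "(b * lam + 2 * sig / b)\<^sup>2 = (b * lam)\<^sup>2 + 4 * lam * sig + (2 * sig / b)\<^sup>2"
    using b by (simp add: power2_eq_square field_simps)
  moreover have "(a - b * lam)\<^sup>2 = a\<^sup>2 - 2 * lam * (b * a) + (b * lam)\<^sup>2"
    by (simp add: power2_diff algebra_simps)
  ultimately have "(a - b * lam)\<^sup>2 \<le> (b * lam + 2 * sig / b)\<^sup>2"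
    using zero_le_power2 [of "2 * sig / b"] by linarith
  then have "a - b * lam \<le> b * lam + 2 * sig / b"
    by (rule power2_le_imp_le) (use lam b sig in simp)
  then show ?thesis
    by simp
qed

lemma cone_scalar_bounds:
  fixes s p q lam sig a L H :: real
  assumes s: "0 < s" and p: "0 \<le> p" and q: "s * q < 1"
    and lam: "0 < lam" and sig: "0 \<le> sig" and H: "0 \<le> H"
    and cone: "H \<le> s * L + 2 * sig + a - a\<^sup>2 / (2 * lam)"
    and head: "L \<le> p * a + q * H"
  shows "a \<le> 2 / (s * p + 1) * sig + 2 * (s * p + 1) * lam"
    and "H \<le> ((s * p + 1)\<^sup>2 * lam / 2 + 2 * sig) / (1 - s * q)"
proof -
  define b D where "b = s * p + 1" and "D = 1 - s * q"
  have b: "0 < b" and D: "0 < D"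
    using s p q by (simp_all add: b_def D_def add_nonneg_pos)
  have "s * L \<le> s * (p * a + q * H)"
    using head s by simp
  then have DH: "D * H \<le> b * a + 2 * sig - a\<^sup>2 / (2 * lam)"
    using cone by (simp add: b_def D_def algebra_simps)
  moreover have "0 \<le> D * H"
    using D H by simp
  ultimately show "a \<le> 2 / (s * p + 1) * sig + 2 * (s * p + 1) * lam"
    unfolding b_def [symmetric] by (intro le_of_quadratic_le [OF lam b sig]) linarith
  have "b * a - a\<^sup>2 / (2 * lam) = b\<^sup>2 * lam / 2 - (a - b * lam)\<^sup>2 / (2 * lam)"
    using lam by (simp add: field_simps power2_eq_square)
  also have "\<dots> \<le> b\<^sup>2 * lam / 2"
    using lam by simp
  finally show "H \<le> ((s * p + 1)\<^sup>2 * lam / 2 + 2 * sig) / (1 - s * q)"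
    using DH D unfolding b_def [symmetric] D_def [symmetric] by (simp add: pos_le_divide_eq mult.commute)
qed

lemma sigma_coefficient_le:
  fixes s p q :: real
  assumes s: "0 < s" and p: "0 \<le> p" and q: "0 \<le> q" "s * q < 1"
  shows "2 * p / (s * p + 1) + (2 * q * s + 1) / (s * (1 - s * q))
    \<le> (2 * s * p * (s\<^sup>2 * q\<^sup>2 + 3 * s * q + 3) + 2 * (2 * s\<^sup>2 * q\<^sup>2 + 4 * s * q + 1))
       / (s * (1 - s * q) * (s * p + 1))"
proof -
  have b: "0 < s * p + 1" and D: "0 < 1 - s * q"
    using s p q by (simp_all add: add_nonneg_pos)
  then have nz: "s * p + 1 \<noteq> 0" "1 - s * q \<noteq> 0" "s \<noteq> 0"
    using s by simp_all
  have pos: "0 < s * (1 - s * q) * (s * p + 1)"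
    using s b D by simp
  have "2 * p / (s * p + 1) + (2 * q * s + 1) / (s * (1 - s * q))
      = (3 * p * s + 2 * q * s + 1) / (s * (1 - s * q) * (s * p + 1))"
    using nz by (simp add: field_simps)
  also have "\<dots> \<le> (2 * s * p * (s\<^sup>2 * q\<^sup>2 + 3 * s * q + 3) + 2 * (2 * s\<^sup>2 * q\<^sup>2 + 4 * s * q + 1))
       / (s * (1 - s * q) * (s * p + 1))"
  proof (rule divide_right_mono)
    have "0 \<le> s * p * (s * q)\<^sup>2" "0 \<le> s * p * (s * q)" "0 \<le> s * p" "0 \<le> s * q"
      "0 \<le> s * q * (s * q)"
      using s p q by simp_all
    then show "3 * p * s + 2 * q * s + 1
        \<le> 2 * s * p * (s\<^sup>2 * q\<^sup>2 + 3 * s * q + 3) + 2 * (2 * s\<^sup>2 * q\<^sup>2 + 4 * s * q + 1)"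
      by (simp add: power2_eq_square algebra_simps)
  qed (use pos in simp)
  finally show ?thesis .
qed

lemma lambda_coefficient_le:
  fixes s p q :: real
  assumes s: "0 < s" and p: "0 \<le> p" and q: "0 \<le> q" "s * q < 1"
  shows "2 * p * (s * p + 1) + (2 * q * s + 1) * (s * p + 1)\<^sup>2 / (4 * s * (1 - s * q))
    \<le> (s * p * (5 + 2 * s * q) + (2 * s\<^sup>2 * q\<^sup>2 + 4 * s * q + 1)) * (s * p + 1) / (s * (1 - s * q))"
proof -
  have b: "0 < s * p + 1" and D: "0 < 1 - s * q"
    using s p q by (simp_all add: add_nonneg_pos)
  then have nz: "s * p + 1 \<noteq> 0" "1 - s * q \<noteq> 0" "s \<noteq> 0"
    using s by simp_all
  have "2 * p * (s * p + 1) + (2 * q * s + 1) * (s * p + 1)\<^sup>2 / (4 * s * (1 - s * q))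
      = (9 * p * s - 6 * p * s\<^sup>2 * q + 2 * q * s + 1) / 4 * (s * p + 1) / (s * (1 - s * q))"
    using nz by (simp add: field_simps power2_eq_square algebra_simps)
  also have "\<dots> \<le> (s * p * (5 + 2 * s * q) + (2 * s\<^sup>2 * q\<^sup>2 + 4 * s * q + 1)) * (s * p + 1)
      / (s * (1 - s * q))"
  proof (intro divide_right_mono mult_right_mono)
    have "0 \<le> s * p * (s * q)" "0 \<le> s * p" "0 \<le> s * q" "0 \<le> s * q * (s * q)"
      using s p q by simp_all
    then show "(9 * p * s - 6 * p * s\<^sup>2 * q + 2 * q * s + 1) / 4
        \<le> s * p * (5 + 2 * s * q) + (2 * s\<^sup>2 * q\<^sup>2 + 4 * s * q + 1)"
      by (simp add: power2_eq_square algebra_simps)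
  qed (use s b D in simp_all)
  finally show ?thesis .
qed

lemma lasso_scalar_bounds:
  fixes s p q lam sig a L H e :: real
  assumes s: "0 < s" and p: "0 \<le> p" and q: "0 \<le> q" "s * q < 1"
    and lam: "0 < lam" and sig: "0 \<le> sig" and H: "0 \<le> H"
    and cone: "H \<le> s * L + 2 * sig + a - a\<^sup>2 / (2 * lam)"
    and head: "L \<le> p * a + q * H" and tail: "e \<le> L + H / (2 * s)"
  shows "a \<le> 2 / (s * p + 1) * sig + 2 * (s * p + 1) * lam"
    and "e \<le> (2 * s * p * (s\<^sup>2 * q\<^sup>2 + 3 * s * q + 3) + 2 * (2 * s\<^sup>2 * q\<^sup>2 + 4 * s * q + 1))
               / (s * (1 - s * q) * (s * p + 1)) * sig
            + (s * p * (5 + 2 * s * q) + (2 * s\<^sup>2 * q\<^sup>2 + 4 * s * q + 1)) * (s * p + 1)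
               / (s * (1 - s * q)) * lam"
      (is "_ \<le> ?C3 * sig + ?C4 * lam")
proof -
  note a = cone_scalar_bounds(1) [OF s p q(2) lam sig H cone head]
  note H_le = cone_scalar_bounds(2) [OF s p q(2) lam sig H cone head]
  show "a \<le> 2 / (s * p + 1) * sig + 2 * (s * p + 1) * lam"
    by (fact a)
  have "0 < s * p + 1" and "0 < 1 - s * q"
    using s p q by (simp_all add: add_nonneg_pos)
  then have nz: "s * p + 1 \<noteq> 0" "1 - s * q \<noteq> 0" "s \<noteq> 0"
    using s by simp_all
  have "(q + 1 / (2 * s)) * H = q * H + H / (2 * s)"
    by (simp add: ring_distribs)
  then have "e \<le> p * a + (q + 1 / (2 * s)) * H"
    using tail head by linarith
  also have "\<dots> \<le> p * (2 / (s * p + 1) * sig + 2 * (s * p + 1) * lam)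
      + (q + 1 / (2 * s)) * (((s * p + 1)\<^sup>2 * lam / 2 + 2 * sig) / (1 - s * q))"
    using a H_le p q s by (intro add_mono mult_left_mono) simp_all
  also have "\<dots> = (2 * p / (s * p + 1) + (2 * q * s + 1) / (s * (1 - s * q))) * sig
      + (2 * p * (s * p + 1) + (2 * q * s + 1) * (s * p + 1)\<^sup>2 / (4 * s * (1 - s * q))) * lam"
  proof -
    have "p * (2 / b * sig + 2 * b * lam) + (q + 1 / (2 * s)) * ((b\<^sup>2 * lam / 2 + 2 * sig) / D)
        = (2 * p / b + (2 * q * s + 1) / (s * D)) * sig + (2 * p * b + (2 * q * s + 1) * b\<^sup>2 / (4 * s * D)) * lam"
      if "b \<noteq> 0" "D \<noteq> 0" for b D
      using that nz(3) by (simp add: field_simps)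
    then show ?thesis
      using nz(1,2) by blast
  qed
  also have "\<dots> \<le> ?C3 * sig + ?C4 * lam"
    using sigma_coefficient_le [OF s p q] lambda_coefficient_le [OF s p q] sig lam
    by (intro add_mono mult_right_mono) simp_all
  finally show "e \<le> ?C3 * sig + ?C4 * lam" .
qed

theorem corollary1:
  fixes A :: "real ^ 'n ^ 'm" and x xs xk :: "real ^ 'n" and z b :: "real ^ 'm"
    and k :: nat and lam :: real
  assumes "k \<ge> 2"
    and "\<forall>i. norm (column i A) = 1"
    and "mutual_coherence A < 1 / (2 * real k - 1)"
    and "lam > 0"
    and "norm z \<le> lam"
    and "b = A *v x + z"
    and "\<forall>y. l1norm xs + 1 / (2 * lam) * (norm (b - A *v xs))\<^sup>2
              \<le> l1norm y + 1 / (2 * lam) * (norm (b - A *v y))\<^sup>2"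
    and "best_k_term k x xk"
  shows "norm (A *v (xs - x)) \<le> C1 k (mutual_coherence A) * l1norm (x - xk) + C2 k (mutual_coherence A) * lam
       \<and> norm (xs - x) \<le> C3 k (mutual_coherence A) * l1norm (x - xk) + C4 k (mutual_coherence A) * lam"
proof -
  let ?\<mu> = "mutual_coherence A"
  define s h where "s = sqrt (real k)" and "h = xs - x"
  have k: "1 \<le> k"
    using assms(1) by simp
  note \<alpha> = alpha_bounds [OF k mutual_coherence_nonneg assms(3)]
  obtain T where T: "card T \<le> k"
    and maximal: "\<And>T'. card T' \<le> k \<Longrightarrow> (\<Sum>i\<in>T'. \<bar>h $ i\<bar>) \<le> (\<Sum>i\<in>T. \<bar>h $ i\<bar>)"
    using obtain_max_sum_card_le [of k "\<lambda>i. \<bar>h $ i\<bar>"] by blast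
  define v w where "v = restrict_vec T h" and "w = restrict_vec (- T) h"
  \<comment> \<open>Of the best \<open>k\<close>-term approximation only its \<open>k\<close>-sparsity is used.\<close>
  have "card {i. xk $ i \<noteq> 0} \<le> k"
    using assms(8) by (simp add: best_k_term_def l0_def)
  then have "l1norm w \<le> l1norm v + 2 * l1norm (x - xk) + (l1norm xs - l1norm x)"
    unfolding v_def w_def h_def using maximal [unfolded h_def] by (rule l1norm_tail_le)
  moreover have "l1norm v \<le> s * norm v"
    using l1norm_le_sqrt_mult_norm [OF _ T] by (simp add: v_def s_def)
  ultimately have cone: "l1norm w
      \<le> s * norm v + 2 * l1norm (x - xk) + norm (A *v h) - (norm (A *v h))\<^sup>2 / (2 * lam)"
    using lasso_l1norm_gap [OF assms(4-7)] by (simp add: h_def)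
  have "norm v \<le> alpha1 k ?\<mu> * norm (A *v (v + w)) + alpha2 k ?\<mu> * l1norm w"
    by (rule sparse_norm_le_alpha [OF assms(2) _ _ T k \<alpha>(1)]) (simp_all add: v_def w_def)
  then have head: "norm v \<le> alpha1 k ?\<mu> * norm (A *v h) + alpha2 k ?\<mu> * l1norm w"
    by (simp add: v_def w_def restrict_vec_add_Compl)
  have tail: "norm h \<le> norm v + l1norm w / (2 * s)"
    using norm_le_head_add_tail [OF T k maximal] by (simp add: v_def w_def s_def)
  have s: "0 < s" and rk: "real k = s\<^sup>2"
    using k by (simp_all add: s_def)
  note bounds = lasso_scalar_bounds [OF s \<alpha>(2,3) \<alpha>(4) [folded s_def] assms(4)
      l1norm_nonneg l1norm_nonneg cone head tail]
  show ?thesis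
    unfolding C1_def C2_def C3_def C4_def fk_def gk_def s_def [symmetric]
    unfolding rk
    using bounds by (simp add: h_def)
qed

end
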